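(* Assume $\mathfrak C_R \subseteq \mathfrak m^2$, and let $S$, $s$, $b_1<\cdots<b_s$ and $i_0$ be as in the context. Then the Herzog–Kunz sequence $\widetilde a_1 < \cdots < \widetilde a_{n+s}$ of $S$ satisfies $\widetilde a_j = a_j$ for $j \le i_0$ and $$\{\widetilde a_{i_0+1}, \ldots, \widetilde a_{n+s}\} = \{a_{i_0+1}, \ldots, a_n, b_1, \ldots, b_s\},$$ and $S = k[[\widetilde x_1, \ldots, \widetilde x_{n+s}]]$ with Herzog–Kunz generators $\widetilde x_j = x_j$ for $j \le i_0$ and $\widetilde x_j = t^{\widetilde a_j}$ for $j > i_0$.
   Context: Let $k$ be an algebraically closed field of characteristic $0$ and let $(R,\mathfrak m)$ be a complete local noetherian domain of dimension $1$ containing $k$ with $R/\mathfrak m = k$; its normalization is $\overline R = k[[t]]$, $R\subseteq k[[t]]$ finite birational. Let $v$ be the $t$-adic valuation; for $A \subseteq k((t))$ let $v(A)=\{v(f): f\in A\setminus\{0\}\}$, and $V(T)=v(T)$ for a ring $T$. The conductor is $\mathfrak C_R=\{x\in\overline R: x\overline R\subseteq R\} = t^{c_R}\overline R$. For any such ring $T$ (with maximal ideal $\mathfrak m_T$), its Herzog–Kunz sequence is $v(\mathfrak m_T)\setminus v(\mathfrak m_T^2)$ listed increasingly, and Herzog–Kunz generators are elements of $T$ having exactly these valuations (they generate $T$ as $k[[\cdot]]$, the image of a power series ring). Let $a_1<\cdots<a_n$ be the Herzog–Kunz sequence of $R$ and $x_1,\ldots,x_n$ Herzog–Kunz generators of $R$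 with $x_1 = t^{a_1}$. Let $S = R[\mathfrak C_R/x_1]$, let $b_1<\cdots<b_s$ be the elements of $\{c_R-a_1, c_R-a_1+1, \ldots, c_R-1\}$ not in $V(R)$ (so $s$ is the reduced type of $R$), and let $i_0 = \max\{i : a_i < c_R - a_1\}$. Known facts (used as given): $S = R[t^{b_1},\ldots,t^{b_s}]$ is again such a ring, $\mathfrak C_S = t^{c_R-a_1}\overline R$ so $c_S = c_R - a_1$, and $\mathrm{edim}(S) = n+s$. *)

theory Defs
  imports "HOL-Computational_Algebra.Computational_Algebra"
begin

text \<open>Power series over k: the type 'a fps, t = fps_X, v = subdegree.\<close>

definition alg_closed_field :: "('a::field) itself \<Rightarrow> bool" where
  "alg_closed_field _ \<longleftrightarrow> (\<forall>p :: 'a poly. degree p > 0 \<longrightarrow> (\<exists>z. poly p z = 0))"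

definition vals :: "'a::field fps set \<Rightarrow> nat set" where
  "vals A = {subdegree f | f. f \<in> A \<and> f \<noteq> 0}"

text \<open>A complete one-dimensional local k-subalgebra of k[[t]] with residue field k,
  normalization k[[t]] (finite birational): a k-subalgebra containing t^c k[[t]] for some c.\<close>
definition curve_ring :: "'a::field fps set \<Rightarrow> bool" where
  "curve_ring R \<longleftrightarrow>
     (\<forall>a. fps_const a \<in> R) \<and>
     (\<forall>f\<in>R. \<forall>g\<in>R. f + g \<in> R \<and> f * g \<in> R \<and> - f \<in> R) \<and>
     (\<exists>c. \<forall>f. (\<forall>i<c. fps_nth f i = 0) \<longrightarrow> f \<in> R)"

definition max_ideal :: "'a::field fps set \<Rightarrow> 'a fps set" where
  "max_ideal R = {f \<in> R. fps_nth f 0 = 0}"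

definition fps_ideal_mult :: "'a::field fps set \<Rightarrow> 'a fps set \<Rightarrow> 'a fps set" where
  "fps_ideal_mult I J = {(\<Sum>i<N. f i * g i) | (N::nat) f g. \<forall>i<N. f i \<in> I \<and> g i \<in> J}"

definition conductor :: "'a::field fps set \<Rightarrow> 'a fps set" where
  "conductor R = {x. \<forall>y. x * y \<in> R}"

definition cond_exp :: "'a::field fps set \<Rightarrow> nat" where
  "cond_exp R = (LEAST c. conductor R = {f. \<forall>i<c. fps_nth f i = 0})"

definition HK_seq :: "'a::field fps set \<Rightarrow> nat list" where
  "HK_seq R = sorted_list_of_set
     (vals (max_ideal R) - vals (fps_ideal_mult (max_ideal R) (max_ideal R)))"

inductive_set alg_gen :: "'a::field fps set \<Rightarrow> 'a fps set" for Y where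
  const: "fps_const a \<in> alg_gen Y"
| gen: "y \<in> Y \<Longrightarrow> y \<in> alg_gen Y"
| add: "f \<in> alg_gen Y \<Longrightarrow> g \<in> alg_gen Y \<Longrightarrow> f + g \<in> alg_gen Y"
| mult: "f \<in> alg_gen Y \<Longrightarrow> g \<in> alg_gen Y \<Longrightarrow> f * g \<in> alg_gen Y"

text \<open>k[[Y]]: the image of the power series ring in the elements Y (all of positive
  valuation), i.e. the t-adic closure of k[Y].\<close>
definition ps_gen :: "'a::field fps set \<Rightarrow> 'a fps set" where
  "ps_gen Y = {f. \<forall>N. \<exists>g\<in>alg_gen Y. \<forall>i<N. fps_nth f i = fps_nth g i}"

end

theory Submission
  imports Defs "HOL-Library.Set_Algebras"
begin

(* Since the conductor C = t^c k[[t]] lies in m^2, the multiplicity a (the least value of m)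
   satisfies 2a <= c, and S = R[C/x_1] = R + t^(c-a) k[[t]]. The maximal ideal of S is
   m + t^(c-a) k[[t]], and as t^(c-a) k[[t]] * m_S and m * t^(c-a) k[[t]] already lie in
   t^c k[[t]] = C, which is contained in m^2, we get m_S^2 = m^2. So the Herzog-Kunz values of S
   are those of R together with the gaps of V(R) in [c-a, c); the values below c - a keep their
   positions in the sequence.
   Generation holds for any subalgebra S of k[[t]] containing some t^N k[[t]] and any elements
   realising its Herzog-Kunz values: leading terms are removed one at a time, since a leading value
   is 0, a Herzog-Kunz value, or the value of an element of m_S^2, and elements of m_S^2 are
   approximated to one more order by products of approximations of the factors. *)

section \<open>The ideals t^N k[[t]]\<close>

definition fps_order_ge :: "nat \<Rightarrow> 'a::field fps set" where
  "fps_order_ge N = {f. \<forall>i<N. f $ i = 0}"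

lemma fps_order_ge_iff: "f \<in> fps_order_ge N \<longleftrightarrow> f = 0 \<or> N \<le> subdegree f"
  unfolding fps_order_ge_def
  by (auto intro: subdegree_geI nth_less_subdegree_zero[OF less_le_trans])

lemma fps_order_ge_0 [simp]: "fps_order_ge 0 = UNIV"
  by (simp add: fps_order_ge_def)

lemma zero_mem_fps_order_ge [simp]: "0 \<in> fps_order_ge N"
  by (simp add: fps_order_ge_def)

lemma mem_fps_order_ge_Suc_0 [simp]: "f \<in> fps_order_ge (Suc 0) \<longleftrightarrow> f $ 0 = 0"
  by (simp add: fps_order_ge_def)

lemma X_power_mem_fps_order_ge_iff [simp]: "fps_X ^ d \<in> fps_order_ge N \<longleftrightarrow> N \<le> d"
  by (auto simp: fps_order_ge_def)

lemma fps_order_ge_add: "f \<in> fps_order_ge N \<Longrightarrow> g \<in> fps_order_ge N \<Longrightarrow> f + g \<in> fps_order_ge N"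
  by (simp add: fps_order_ge_def)

lemma fps_order_ge_diff: "f \<in> fps_order_ge N \<Longrightarrow> g \<in> fps_order_ge N \<Longrightarrow> f - g \<in> fps_order_ge N"
  by (simp add: fps_order_ge_def)

lemma fps_order_ge_antimono: "M \<le> N \<Longrightarrow> fps_order_ge N \<subseteq> fps_order_ge M"
  by (auto simp: fps_order_ge_def)

lemma fps_order_ge_mult: "f \<in> fps_order_ge M \<Longrightarrow> g \<in> fps_order_ge N \<Longrightarrow> f * g \<in> fps_order_ge (M + N)"
  unfolding fps_order_ge_iff by (cases "f = 0 \<or> g = 0") auto

lemma fps_order_ge_mult_left: "g \<in> fps_order_ge N \<Longrightarrow> f * g \<in> fps_order_ge N"
  using fps_order_ge_mult[of f 0 g N] by simp

lemma fps_order_ge_mult_right: "f \<in> fps_order_ge N \<Longrightarrow> f * g \<in> fps_order_ge N"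
  using fps_order_ge_mult[of f N g 0] by simp

lemma subdegree_eq_if_fps_order_ge_diff:
  assumes "f - g \<in> fps_order_ge N" "f \<noteq> 0" "subdegree f < N"
  shows "g \<noteq> 0 \<and> subdegree g = subdegree f"
proof -
  have agree: "g $ i = f $ i" if "i < N" for i
    using assms(1) that by (auto simp: fps_order_ge_def)
  then have g_lead: "g $ subdegree f \<noteq> 0" using assms(2,3) by simp
  then have "g \<noteq> 0" by auto
  moreover have "subdegree f \<le> subdegree g"
    using \<open>g \<noteq> 0\<close> agree assms(3) by (intro subdegree_geI) auto
  ultimately show ?thesis using subdegree_leI[OF g_lead] by simp
qed

lemma mult_X_power_mem_fps_order_ge_iff:
  assumes "a \<le> c"
  shows "fps_X ^ a * f \<in> fps_order_ge c \<longleftrightarrow> f \<in> fps_order_ge (c - a)"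
proof
  assume "fps_X ^ a * f \<in> fps_order_ge c"
  then have "f $ j = 0" if "j < c - a" for j
    using that by (auto simp: fps_order_ge_def fps_X_power_mult_nth dest!: spec[of _ "j + a"])
  then show "f \<in> fps_order_ge (c - a)" by (simp add: fps_order_ge_def)
next
  assume "f \<in> fps_order_ge (c - a)"
  then show "fps_X ^ a * f \<in> fps_order_ge c"
    by (auto simp: fps_order_ge_def fps_X_power_mult_nth)
qed

lemma vals_mono: "A \<subseteq> B \<Longrightarrow> vals A \<subseteq> vals B"
  by (auto simp: vals_def)

lemma mem_vals_max_ideal_iff: "0 < d \<Longrightarrow> d \<in> vals (max_ideal R) \<longleftrightarrow> d \<in> vals R"
  by (auto simp: vals_def max_ideal_def)

lemma zero_notin_vals_max_ideal: "0 \<notin> vals (max_ideal S)"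
  by (auto simp: vals_def max_ideal_def subdegree_eq_0_iff)

lemma subset_fps_order_ge_Least_vals: "A \<subseteq> fps_order_ge (LEAST d. d \<in> vals A)"
proof
  fix f assume "f \<in> A"
  then have "f = 0 \<or> subdegree f \<in> vals A" by (auto simp: vals_def)
  then show "f \<in> fps_order_ge (LEAST d. d \<in> vals A)" by (auto simp: fps_order_ge_iff intro: Least_le)
qed

lemma max_ideal_subset: "max_ideal S \<subseteq> S"
  by (simp add: max_ideal_def)

section \<open>Subalgebras of k[[t]] and products of ideals\<close>

definition fps_subalgebra :: "'a::field fps set \<Rightarrow> bool" where
  "fps_subalgebra S \<longleftrightarrow>
     (\<forall>a. fps_const a \<in> S) \<and> (\<forall>f\<in>S. \<forall>g\<in>S. f + g \<in> S \<and> f * g \<in> S \<and> - f \<in> S)"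

lemma fps_subalgebra_if_curve_ring: "curve_ring R \<Longrightarrow> fps_subalgebra R"
  by (simp add: curve_ring_def fps_subalgebra_def)

lemma fps_subalgebra_alg_gen: "fps_subalgebra (alg_gen Y)"
  unfolding fps_subalgebra_def
proof (intro conjI ballI allI)
  fix f g assume f: "f \<in> alg_gen Y" and g: "g \<in> alg_gen Y"
  show "f + g \<in> alg_gen Y" using f g by (rule alg_gen.add)
  show "f * g \<in> alg_gen Y" using f g by (rule alg_gen.mult)
  have "fps_const (-1) * f \<in> alg_gen Y" using f by (intro alg_gen.mult alg_gen.const)
  then show "- f \<in> alg_gen Y" by (simp add: fps_const_neg[symmetric])
qed (rule alg_gen.const)

context
  fixes S :: "'a::field fps set"
  assumes S: "fps_subalgebra S"
begin

lemma fps_subalgebra_const: "fps_const a \<in> S"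
  using S by (simp add: fps_subalgebra_def)

lemma fps_subalgebra_zero: "0 \<in> S"
  using fps_subalgebra_const[of 0] by simp

lemma fps_subalgebra_one: "1 \<in> S"
  using fps_subalgebra_const[of 1] by simp

lemma fps_subalgebra_add: "f \<in> S \<Longrightarrow> g \<in> S \<Longrightarrow> f + g \<in> S"
  using S by (simp add: fps_subalgebra_def)

lemma fps_subalgebra_mult: "f \<in> S \<Longrightarrow> g \<in> S \<Longrightarrow> f * g \<in> S"
  using S by (simp add: fps_subalgebra_def)

lemma fps_subalgebra_diff: "f \<in> S \<Longrightarrow> g \<in> S \<Longrightarrow> f - g \<in> S"
  using S unfolding fps_subalgebra_def by (metis diff_conv_add_uminus)

lemma alg_gen_least: "Y \<subseteq> S \<Longrightarrow> alg_gen Y \<subseteq> S"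
proof
  fix f assume "Y \<subseteq> S" "f \<in> alg_gen Y"
  from \<open>f \<in> alg_gen Y\<close> show "f \<in> S"
    by induction (use \<open>Y \<subseteq> S\<close> in \<open>auto intro: fps_subalgebra_const fps_subalgebra_add fps_subalgebra_mult\<close>)
qed

end

lemma fps_ideal_mult_zero: "0 \<in> fps_ideal_mult I J"
  unfolding fps_ideal_mult_def by (rule CollectI, rule exI[of _ 0]) auto

lemma fps_ideal_mult_mult_add:
  assumes "f \<in> I" "g \<in> J" "h \<in> fps_ideal_mult I J"
  shows "f * g + h \<in> fps_ideal_mult I J"
proof -
  obtain N :: nat and p q where h: "h = (\<Sum>i<N. p i * q i)" and pq: "\<forall>i<N. p i \<in> I \<and> q i \<in> J"
    using assms(3) unfolding fps_ideal_mult_def by blast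
  have "f * g + h = (\<Sum>i<Suc N. (p(N := f)) i * (q(N := g)) i)"
    by (simp add: h add.commute)
  moreover have "\<forall>i<Suc N. (p(N := f)) i \<in> I \<and> (q(N := g)) i \<in> J"
    using pq assms(1,2) by (simp add: less_Suc_eq)
  ultimately show ?thesis unfolding fps_ideal_mult_def by blast
qed

lemma fps_ideal_mult_induct [consumes 1, case_names zero mult_add]:
  assumes "h \<in> fps_ideal_mult I J"
    and "P 0"
    and "\<And>f g h. f \<in> I \<Longrightarrow> g \<in> J \<Longrightarrow> P h \<Longrightarrow> P (f * g + h)"
  shows "P h"
proof -
  obtain N :: nat and p q where h: "h = (\<Sum>i<N. p i * q i)" and pq: "\<forall>i<N. p i \<in> I \<and> q i \<in> J"
    using assms(1) unfolding fps_ideal_mult_def by blast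
  have "P (\<Sum>i<K. p i * q i)" if "K \<le> N" for K
    using that by (induction K) (simp_all add: assms(2,3) pq add.commute)
  then show ?thesis by (simp add: h)
qed

lemma fps_ideal_mult_add:
  assumes "h \<in> fps_ideal_mult I J" "h' \<in> fps_ideal_mult I J"
  shows "h + h' \<in> fps_ideal_mult I J"
  using assms(1) by (induction rule: fps_ideal_mult_induct) (simp_all add: assms(2) add.assoc fps_ideal_mult_mult_add)

lemma fps_ideal_mult_mono: "I \<subseteq> I' \<Longrightarrow> J \<subseteq> J' \<Longrightarrow> fps_ideal_mult I J \<subseteq> fps_ideal_mult I' J'"
  unfolding fps_ideal_mult_def by blast

lemma fps_ideal_mult_subset_fps_order_ge:
  assumes "I \<subseteq> fps_order_ge M" "J \<subseteq> fps_order_ge N"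
  shows "fps_ideal_mult I J \<subseteq> fps_order_ge (M + N)"
proof
  fix h assume "h \<in> fps_ideal_mult I J"
  then show "h \<in> fps_order_ge (M + N)"
  proof (induction rule: fps_ideal_mult_induct)
    case (mult_add f g h)
    then have "f \<in> fps_order_ge M" "g \<in> fps_order_ge N" using assms by auto
    then show ?case using mult_add(3) by (intro fps_order_ge_add fps_order_ge_mult)
  qed simp
qed

lemma fps_ideal_mult_subset_subalgebra:
  assumes "fps_subalgebra S" "I \<subseteq> S" "J \<subseteq> S"
  shows "fps_ideal_mult I J \<subseteq> S"
proof
  fix h assume "h \<in> fps_ideal_mult I J"
  then show "h \<in> S"
  proof (induction rule: fps_ideal_mult_induct)
    case zero
    show ?case using assms(1) by (rule fps_subalgebra_zero)
  next
    case (mult_add f g h)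
    then have "f \<in> S" "g \<in> S" using assms by auto
    then show ?case using assms(1) mult_add(3) by (intro fps_subalgebra_add fps_subalgebra_mult)
  qed
qed

abbreviation max_ideal_sq :: "'a::field fps set \<Rightarrow> 'a fps set" where
  "max_ideal_sq S \<equiv> fps_ideal_mult (max_ideal S) (max_ideal S)"

lemma max_ideal_sq_subset:
  assumes "fps_subalgebra S"
  shows "max_ideal_sq S \<subseteq> max_ideal S"
proof -
  have m: "max_ideal S \<subseteq> fps_order_ge (Suc 0)" by (auto simp: max_ideal_def)
  have "max_ideal_sq S \<subseteq> fps_order_ge (Suc 0 + Suc 0)"
    using fps_ideal_mult_subset_fps_order_ge[OF m m] .
  also have "\<dots> \<subseteq> fps_order_ge (Suc 0)"
    by (rule fps_order_ge_antimono) simp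
  finally have "max_ideal_sq S \<subseteq> fps_order_ge (Suc 0)" .
  moreover have "max_ideal_sq S \<subseteq> S"
    using assms max_ideal_subset by (intro fps_ideal_mult_subset_subalgebra)
  ultimately show ?thesis by (auto simp: max_ideal_def)
qed

lemma mem_plus_fps_order_ge_iff:
  "f \<in> R + fps_order_ge N \<longleftrightarrow> (\<exists>r\<in>R. f - r \<in> fps_order_ge N)"
proof
  assume "f \<in> R + fps_order_ge N"
  then obtain r t where "f = r + t" "r \<in> R" "t \<in> fps_order_ge N" by (rule set_plus_elim)
  then show "\<exists>r\<in>R. f - r \<in> fps_order_ge N" by (intro bexI[of _ r]) simp_all
next
  assume "\<exists>r\<in>R. f - r \<in> fps_order_ge N"
  then obtain r where "r \<in> R" "f - r \<in> fps_order_ge N" by blast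
  then have "r + (f - r) \<in> R + fps_order_ge N" by (rule set_plus_intro)
  then show "f \<in> R + fps_order_ge N" by simp
qed

lemma fps_subalgebra_plus_fps_order_ge:
  assumes R: "fps_subalgebra R"
  shows "fps_subalgebra (R + fps_order_ge N)"
  unfolding fps_subalgebra_def
proof (intro conjI allI ballI)
  fix a
  show "fps_const a \<in> R + fps_order_ge N"
    using fps_subalgebra_const[OF R, of a] mem_plus_fps_order_ge_iff by fastforce
next
  fix f g assume "f \<in> R + fps_order_ge N" "g \<in> R + fps_order_ge N"
  then obtain r s where r: "r \<in> R" "f - r \<in> fps_order_ge N" and s: "s \<in> R" "g - s \<in> fps_order_ge N"
    by (auto simp: mem_plus_fps_order_ge_iff)
  have "(f - r) + (g - s) \<in> fps_order_ge N" using r(2) s(2) by (rule fps_order_ge_add)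
  then show "f + g \<in> R + fps_order_ge N"
    using fps_subalgebra_add[OF R r(1) s(1)] by (auto simp: mem_plus_fps_order_ge_iff algebra_simps)
  have "(f - r) * g + r * (g - s) \<in> fps_order_ge N"
    using r(2) s(2) by (intro fps_order_ge_add fps_order_ge_mult_left fps_order_ge_mult_right)
  then show "f * g \<in> R + fps_order_ge N"
    using fps_subalgebra_mult[OF R r(1) s(1)] by (auto simp: mem_plus_fps_order_ge_iff algebra_simps)
  have "- f - (- r) \<in> fps_order_ge N" using r(2) by (simp add: fps_order_ge_def)
  moreover have "- r \<in> R" using R r(1) by (simp add: fps_subalgebra_def)
  ultimately show "- f \<in> R + fps_order_ge N"
    unfolding mem_plus_fps_order_ge_iff by blast
qed

lemma subset_plus_fps_order_ge: "R \<subseteq> R + fps_order_ge N"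
  unfolding subset_iff mem_plus_fps_order_ge_iff by (metis diff_self zero_mem_fps_order_ge)

lemma fps_order_ge_subset_plus: "0 \<in> R \<Longrightarrow> fps_order_ge N \<subseteq> R + fps_order_ge N"
  unfolding subset_iff mem_plus_fps_order_ge_iff by (metis diff_zero)

lemma alg_gen_Un_fps_order_ge:
  assumes R: "fps_subalgebra R"
  shows "alg_gen (R \<union> fps_order_ge N) = R + fps_order_ge N"
proof
  have "R \<union> fps_order_ge N \<subseteq> R + fps_order_ge N"
    using subset_plus_fps_order_ge fps_order_ge_subset_plus[OF fps_subalgebra_zero[OF R]] by blast
  then show "alg_gen (R \<union> fps_order_ge N) \<subseteq> R + fps_order_ge N"
    by (rule alg_gen_least[OF fps_subalgebra_plus_fps_order_ge[OF R]])
next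
  show "R + fps_order_ge N \<subseteq> alg_gen (R \<union> fps_order_ge N)"
    by (auto simp: set_plus_def intro: alg_gen.add alg_gen.gen)
qed

section \<open>Herzog--Kunz generators generate\<close>

definition HK_vals :: "'a::field fps set \<Rightarrow> nat set" where
  "HK_vals S = vals (max_ideal S) - vals (max_ideal_sq S)"

lemma HK_seq_eq: "HK_seq S = sorted_list_of_set (HK_vals S)"
  by (simp add: HK_seq_def HK_vals_def)

lemma subdegree_less_cancel_leading_term:
  fixes f z :: "'a::field fps"
  assumes "z \<noteq> 0" "subdegree z = subdegree f"
  shows "f - fps_const (f $ subdegree f / z $ subdegree f) * z = 0 \<or>
    subdegree f < subdegree (f - fps_const (f $ subdegree f / z $ subdegree f) * z)"
    (is "?f' = 0 \<or> _")
proof (cases "?f' = 0")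
  case False
  have z_lead: "z $ subdegree f \<noteq> 0" using assms nth_subdegree_nonzero[of z] by simp
  have "?f' $ i = 0" if "i \<le> subdegree f" for i
  proof (cases "i = subdegree f")
    case True
    then show ?thesis using z_lead by simp
  next
    case False
    then have "i < subdegree f" "i < subdegree z" using that assms(2) by auto
    then have "f $ i = 0" "z $ i = 0" by (simp_all only: nth_less_subdegree_zero)
    then show ?thesis by simp
  qed
  then show ?thesis using subdegree_greaterI[OF False] by blast
qed simp

lemma fps_subalgebra_subsetI:
  fixes S A :: "'a::field fps set"
  assumes S: "fps_subalgebra S" and A: "fps_subalgebra A" and tail: "fps_order_ge N \<subseteq> A"
    and lead: "\<And>g. g \<in> S \<Longrightarrow> g \<noteq> 0 \<Longrightarrow> subdegree g < N \<Longrightarrow>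
                 \<exists>z\<in>S \<inter> A. z \<noteq> 0 \<and> subdegree z = subdegree g"
  shows "S \<subseteq> A"
proof
  fix f assume "f \<in> S"
  then show "f \<in> A"
  proof (induction f rule: measure_induct_rule[of "\<lambda>f. N - subdegree f"])
    case (less f)
    show ?case
    proof (cases "f \<in> fps_order_ge N")
      case True
      then show ?thesis using tail by blast
    next
      case False
      then have f: "f \<noteq> 0" "subdegree f < N" by (auto simp: fps_order_ge_iff)
      then obtain z where z: "z \<in> S" "z \<in> A" "z \<noteq> 0" "subdegree z = subdegree f"
        using lead less.prems by blast
      define u where "u = f $ subdegree f / z $ subdegree f"
      define f' where "f' = f - fps_const u * z"
      have f'_S: "f' \<in> S"
        unfolding f'_def using S less.prems z(1)
        by (intro fps_subalgebra_diff fps_subalgebra_mult fps_subalgebra_const)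
      have "f' \<in> A"
      proof (cases "f' = 0")
        case True
        then show ?thesis using fps_subalgebra_zero[OF A] by simp
      next
        case False
        then have "subdegree f < subdegree f'"
          using subdegree_less_cancel_leading_term[OF z(3,4)] by (simp add: f'_def u_def)
        then have "N - subdegree f' < N - subdegree f" using f(2) by linarith
        then show ?thesis using less.IH f'_S by blast
      qed
      then have "f' + fps_const u * z \<in> A"
        using A z(2) by (intro fps_subalgebra_add fps_subalgebra_mult fps_subalgebra_const)
      then show ?thesis by (simp add: f'_def)
    qed
  qed
qed

lemma fps_ideal_mult_subset_plus_fps_order_ge:
  fixes A :: "'a::field fps set"
  assumes A: "fps_subalgebra A" and "Suc 0 \<le> N"
    and I: "I \<subseteq> fps_order_ge (Suc 0)" "I \<subseteq> A + fps_order_ge N"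
    and J: "J \<subseteq> fps_order_ge (Suc 0)" "J \<subseteq> A + fps_order_ge N"
  shows "fps_ideal_mult I J \<subseteq> A + fps_order_ge (Suc N)"
proof
  have A': "fps_subalgebra (A + fps_order_ge (Suc N))"
    using A by (rule fps_subalgebra_plus_fps_order_ge)
  fix h assume "h \<in> fps_ideal_mult I J"
  then show "h \<in> A + fps_order_ge (Suc N)"
  proof (induction rule: fps_ideal_mult_induct)
    case zero
    show ?case using A' by (rule fps_subalgebra_zero)
  next
    case (mult_add p q h)
    have "p \<in> A + fps_order_ge N" "q \<in> A + fps_order_ge N"
      using I(2) J(2) mult_add(1,2) by blast+
    then obtain p' q' where p': "p' \<in> A" "p - p' \<in> fps_order_ge N"
      and q': "q' \<in> A" "q - q' \<in> fps_order_ge N"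
      unfolding mem_plus_fps_order_ge_iff by blast
    have p: "p \<in> fps_order_ge (Suc 0)" and q: "q \<in> fps_order_ge (Suc 0)"
      using I(1) J(1) mult_add(1,2) by auto
    have "q - (q - q') \<in> fps_order_ge (Suc 0)"
      using q fps_order_ge_antimono[OF \<open>Suc 0 \<le> N\<close>] q'(2) by (blast intro: fps_order_ge_diff)
    then have "q' \<in> fps_order_ge (Suc 0)" by simp
    then have "(p - p') * q' \<in> fps_order_ge (Suc N)"
      using fps_order_ge_mult[OF p'(2)] by (metis add_Suc_right add_0_right)
    then have "p * (q - q') + (p - p') * q' \<in> fps_order_ge (Suc N)"
      using fps_order_ge_mult[OF p q'(2)] by (auto intro: fps_order_ge_add)
    moreover have "p * (q - q') + (p - p') * q' = p * q - p' * q'"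
      by (simp add: algebra_simps)
    moreover have "p' * q' \<in> A" using A p'(1) q'(1) by (rule fps_subalgebra_mult)
    ultimately have "p * q \<in> A + fps_order_ge (Suc N)"
      unfolding mem_plus_fps_order_ge_iff by metis
    then show ?case using fps_subalgebra_add[OF A' _ mult_add(3)] by blast
  qed
qed

lemma subdegree_attained_in_alg_gen_plus_fps_order_ge:
  fixes S :: "'a::field fps set"
  assumes S: "fps_subalgebra S" and Y: "Y \<subseteq> S"
    and cover: "\<And>d. d \<in> HK_vals S \<Longrightarrow> \<exists>y\<in>Y. subdegree y = d"
    and approx: "S \<subseteq> alg_gen Y + fps_order_ge N"
    and g: "g \<in> S" "g \<noteq> 0" "subdegree g \<le> N"
  shows "\<exists>z\<in>S \<inter> (alg_gen Y + fps_order_ge (Suc N)). z \<noteq> 0 \<and> subdegree z = subdegree g"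
proof -
  let ?A = "alg_gen Y + fps_order_ge (Suc N)"
  have A: "fps_subalgebra ?A"
    using fps_subalgebra_alg_gen by (rule fps_subalgebra_plus_fps_order_ge)
  have gen_A: "alg_gen Y \<subseteq> ?A" by (rule subset_plus_fps_order_ge)
  show ?thesis
  proof (cases "subdegree g = 0")
    case True
    then show ?thesis
      using fps_subalgebra_one[OF S] fps_subalgebra_one[OF A] by (intro bexI[of _ 1]) auto
  next
    case False
    then have "subdegree g \<in> vals (max_ideal S)"
      using g by (auto simp: vals_def max_ideal_def)
    then consider "subdegree g \<in> HK_vals S" | "subdegree g \<in> vals (max_ideal_sq S)"
      by (auto simp: HK_vals_def)
    then show ?thesis
    proof cases
      case 1
      then obtain y where y: "y \<in> Y" "subdegree y = subdegree g" using cover by blast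
      then have "y \<noteq> 0" using False by auto
      then show ?thesis using y Y gen_A alg_gen.gen[OF y(1)] by blast
    next
      case 2
      then obtain h where h: "h \<in> max_ideal_sq S" "h \<noteq> 0" "subdegree h = subdegree g"
        by (auto simp: vals_def)
      have m: "max_ideal S \<subseteq> fps_order_ge (Suc 0)" "max_ideal S \<subseteq> alg_gen Y + fps_order_ge N"
        using approx max_ideal_subset by (auto simp: max_ideal_def)
      have "Suc 0 \<le> N" using False g(3) by simp
      then have "h \<in> ?A"
        using fps_ideal_mult_subset_plus_fps_order_ge[OF fps_subalgebra_alg_gen _ m m] h(1) by blast
      moreover have "h \<in> S" using h(1) max_ideal_sq_subset[OF S] max_ideal_subset by blast
      ultimately show ?thesis using h by blast
    qed
  qed
qed

lemma subalgebra_subset_alg_gen_plus_fps_order_ge: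
  fixes S :: "'a::field fps set"
  assumes S: "fps_subalgebra S" and Y: "Y \<subseteq> S"
    and cover: "\<And>d. d \<in> HK_vals S \<Longrightarrow> \<exists>y\<in>Y. subdegree y = d"
  shows "S \<subseteq> alg_gen Y + fps_order_ge N"
proof (induction N)
  case 0
  show ?case
    using fps_order_ge_subset_plus[OF fps_subalgebra_zero[OF fps_subalgebra_alg_gen], of 0] by auto
next
  case (Suc N)
  show ?case
  proof (rule fps_subalgebra_subsetI[OF S])
    show "fps_subalgebra (alg_gen Y + fps_order_ge (Suc N))"
      using fps_subalgebra_alg_gen by (rule fps_subalgebra_plus_fps_order_ge)
    show "fps_order_ge (Suc N) \<subseteq> alg_gen Y + fps_order_ge (Suc N)"
      using fps_subalgebra_zero[OF fps_subalgebra_alg_gen] by (rule fps_order_ge_subset_plus)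
  next
    fix g assume "g \<in> S" "g \<noteq> 0" "subdegree g < Suc N"
    then show "\<exists>z\<in>S \<inter> (alg_gen Y + fps_order_ge (Suc N)). z \<noteq> 0 \<and> subdegree z = subdegree g"
      using Suc.IH by (intro subdegree_attained_in_alg_gen_plus_fps_order_ge[OF S Y cover]) auto
  qed
qed

lemma ps_gen_eq_subalgebra:
  fixes S :: "'a::field fps set"
  assumes S: "fps_subalgebra S" and Y: "Y \<subseteq> S"
    and cover: "\<And>d. d \<in> HK_vals S \<Longrightarrow> \<exists>y\<in>Y. subdegree y = d"
    and tail: "fps_order_ge N \<subseteq> S"
  shows "ps_gen Y = S"
proof
  show "ps_gen Y \<subseteq> S"
  proof
    fix f assume "f \<in> ps_gen Y"
    then obtain g where g: "g \<in> alg_gen Y" "\<forall>i<N. f $ i = g $ i"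
      unfolding ps_gen_def by blast
    have "g \<in> S" using alg_gen_least[OF S Y] g(1) by blast
    moreover have "f - g \<in> S" using g(2) tail by (auto simp: fps_order_ge_def)
    ultimately have "g + (f - g) \<in> S" by (rule fps_subalgebra_add[OF S])
    then show "f \<in> S" by simp
  qed
next
  show "S \<subseteq> ps_gen Y"
  proof
    fix f assume "f \<in> S"
    then have "f \<in> alg_gen Y + fps_order_ge M" for M
      using subalgebra_subset_alg_gen_plus_fps_order_ge[OF S Y cover] by blast
    then have "\<exists>g\<in>alg_gen Y. \<forall>i<M. f $ i = g $ i" for M
      unfolding mem_plus_fps_order_ge_iff by (fastforce simp: fps_order_ge_def)
    then show "f \<in> ps_gen Y" by (simp add: ps_gen_def)
  qed
qed

lemma ps_gen_eq_HK_seq: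
  fixes S :: "'a::field fps set"
  assumes S: "fps_subalgebra S" and tail: "fps_order_ge N \<subseteq> S" and fin: "finite (HK_vals S)"
    and g: "\<forall>j<length (HK_seq S). g j \<in> S \<and> subdegree (g j) = HK_seq S ! j"
  shows "S = ps_gen (g ` {..<length (HK_seq S)})"
proof (rule ps_gen_eq_subalgebra[OF S _ _ tail, symmetric])
  show "g ` {..<length (HK_seq S)} \<subseteq> S" using g by blast
next
  fix d assume "d \<in> HK_vals S"
  then have "d \<in> set (HK_seq S)" using fin by (simp add: HK_seq_eq)
  then obtain j where "j < length (HK_seq S)" "HK_seq S ! j = d"
    unfolding in_set_conv_nth by blast
  then show "\<exists>y\<in>g ` {..<length (HK_seq S)}. subdegree y = d" using g by auto
qed

lemma conductor_mult: "x \<in> conductor R \<Longrightarrow> x * g \<in> conductor R"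
  by (simp add: conductor_def mult.assoc)

lemma conductor_eq_fps_order_ge:
  fixes R :: "'a::field fps set"
  assumes "curve_ring R"
  shows "conductor R = fps_order_ge (cond_exp R)"
proof -
  obtain c where c: "fps_order_ge c \<subseteq> R"
    using assms unfolding curve_ring_def fps_order_ge_def by blast
  have "fps_X ^ c * y \<in> fps_order_ge c" for y :: "'a fps"
    by (rule fps_order_ge_mult_right) simp
  then have "fps_X ^ c \<in> conductor R"
    using c by (auto simp: conductor_def)
  define c0 where "c0 = (LEAST d. fps_X ^ d \<in> conductor R)"
  have X_c0: "fps_X ^ c0 \<in> conductor R"
    unfolding c0_def by (rule LeastI) fact
  have "conductor R = fps_order_ge c0"
  proof (intro equalityI subsetI)
    fix f :: "'a fps" assume f: "f \<in> conductor R"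
    show "f \<in> fps_order_ge c0"
    proof (cases "f = 0")
      case False
      then have "f dvd fps_X ^ subdegree f"
        by (simp add: fps_dvd_iff fps_X_power_subdegree)
      then obtain g where "fps_X ^ subdegree f = f * g" by (elim dvdE)
      then have "fps_X ^ subdegree f \<in> conductor R"
        using conductor_mult[OF f] by simp
      then have "c0 \<le> subdegree f"
        unfolding c0_def by (rule Least_le)
      then show ?thesis by (simp add: fps_order_ge_iff)
    qed simp
  next
    fix f :: "'a fps" assume "f \<in> fps_order_ge c0"
    then have "f = fps_shift c0 f * fps_X ^ c0"
      by (cases "f = 0") (simp_all add: fps_order_ge_iff subdegree_decompose')
    then have "f = fps_X ^ c0 * fps_shift c0 f" by (simp add: mult.commute)
    then show "f \<in> conductor R"
      using conductor_mult[OF X_c0] by metis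
  qed
  then have "conductor R = fps_order_ge (LEAST c. conductor R = fps_order_ge c)"
    by (rule LeastI)
  then show ?thesis
    by (simp add: cond_exp_def fps_order_ge_def)
qed

lemma sorted_list_of_set_Un_less:
  fixes A B :: "'a::linorder set"
  assumes "finite A" "finite B" "\<forall>x\<in>A. \<forall>y\<in>B. x < y"
  shows "sorted_list_of_set (A \<union> B) = sorted_list_of_set A @ sorted_list_of_set B"
proof -
  have "A \<inter> B = {}" using assms(3) by auto
  then show ?thesis
    using assms by (subst sorted_list_of_set_unique[symmetric])
      (auto simp: sorted_wrt_append card_Un_disjoint)
qed

lemma Max_Suc_index_less_eq_length:
  fixes xs ys :: "'a::linorder list"
  assumes "\<forall>x\<in>set xs. x < e" "\<forall>y\<in>set ys. e \<le> y"
  shows "Max ({0} \<union> {i + 1 | i. i < length (xs @ ys) \<and> (xs @ ys) ! i < e}) = length xs"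
proof -
  have "(xs @ ys) ! i < e \<longleftrightarrow> i < length xs" if "i < length (xs @ ys)" for i
  proof (cases "i < length xs")
    case True
    then show ?thesis using assms(1) by (simp add: nth_append)
  next
    case False
    then have "ys ! (i - length xs) \<in> set ys" using that by simp
    then show ?thesis using False assms(2) by (auto simp: nth_append not_less)
  qed
  then have indices: "{i + 1 | i. i < length (xs @ ys) \<and> (xs @ ys) ! i < e} = Suc ` {..<length xs}"
    by force
  show ?thesis
    unfolding indices
  proof (intro Max_eqI)
    show "length xs \<in> {0} \<union> Suc ` {..<length xs}" by (cases "length xs") auto
  qed auto
qed

section \<open>The ring R[C/x_1] when the conductor lies in the square of the maximal ideal\<close>

locale conductor_in_max_ideal_sq =
  fixes R :: "'a::field fps set" and a c :: nat
  assumes curve_ring: "curve_ring R"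
    and conductor_subset: "conductor R \<subseteq> max_ideal_sq R"
    and a_def: "a = HK_seq R ! 0"
    and c_def: "c = cond_exp R"
begin

lemma subalgebra: "fps_subalgebra R"
  using curve_ring by (rule fps_subalgebra_if_curve_ring)

lemma conductor_eq: "conductor R = fps_order_ge c"
  unfolding c_def using curve_ring by (rule conductor_eq_fps_order_ge)

lemma fps_order_ge_subset_max_ideal_sq: "fps_order_ge c \<subseteq> max_ideal_sq R"
  using conductor_subset by (simp add: conductor_eq)

lemma mem_vals_max_ideal_sq: "c \<le> d \<Longrightarrow> d \<in> vals (max_ideal_sq R)"
  using fps_order_ge_subset_max_ideal_sq
  by (force simp: vals_def fps_X_power_subdegree intro!: exI[of _ "fps_X ^ d"])

lemma HK_vals_subset: "HK_vals R \<subseteq> {..<c}"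
proof
  fix d assume "d \<in> HK_vals R"
  then have "d \<notin> vals (max_ideal_sq R)" by (simp add: HK_vals_def)
  then show "d \<in> {..<c}" using mem_vals_max_ideal_sq not_less by auto
qed

lemma finite_HK_vals: "finite (HK_vals R)"
  using HK_vals_subset by (rule finite_subset) simp

lemma Least_vals_max_ideal_mem_HK_vals: "(LEAST d. d \<in> vals (max_ideal R)) \<in> HK_vals R"
proof -
  define a0 where "a0 = (LEAST d. d \<in> vals (max_ideal R))"
  have "c \<in> vals (max_ideal R)"
    using mem_vals_max_ideal_sq[of c] vals_mono[OF max_ideal_sq_subset[OF subalgebra]] by blast
  then have a0: "a0 \<in> vals (max_ideal R)"
    unfolding a0_def by (rule LeastI)
  have "max_ideal R \<subseteq> fps_order_ge a0"
    unfolding a0_def by (rule subset_fps_order_ge_Least_vals)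
  then have sq: "max_ideal_sq R \<subseteq> fps_order_ge (a0 + a0)"
    by (intro fps_ideal_mult_subset_fps_order_ge)
  have "a0 \<noteq> 0" using a0 zero_notin_vals_max_ideal by metis
  then have "a0 \<notin> vals (max_ideal_sq R)"
    using sq by (auto simp: vals_def fps_order_ge_iff)
  then show ?thesis using a0 by (simp add: HK_vals_def a0_def)
qed

lemma a_eq_Least: "a = (LEAST d. d \<in> vals (max_ideal R))"
proof -
  have "HK_vals R \<noteq> {}" using Least_vals_max_ideal_mem_HK_vals by blast
  then have "HK_seq R ! 0 = Min (HK_vals R)"
    by (simp add: HK_seq_eq sorted_list_of_set_nonempty[OF finite_HK_vals])
  also have "\<dots> = (LEAST d. d \<in> vals (max_ideal R))"
    using finite_HK_vals Least_vals_max_ideal_mem_HK_vals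
    by (intro Min_eqI) (auto simp: HK_vals_def intro: Least_le)
  finally show ?thesis by (simp add: a_def)
qed

lemma a_mem_HK_vals: "a \<in> HK_vals R"
  using Least_vals_max_ideal_mem_HK_vals by (simp add: a_eq_Least)

lemma max_ideal_subset_fps_order_ge: "max_ideal R \<subseteq> fps_order_ge a"
  unfolding a_eq_Least by (rule subset_fps_order_ge_Least_vals)

lemma a_pos: "0 < a"
proof -
  have "a \<in> vals (max_ideal R)" using a_mem_HK_vals by (simp add: HK_vals_def)
  then show ?thesis using zero_notin_vals_max_ideal[of R] by (metis gr0I)
qed

lemma a_le_c_minus_a: "a \<le> c - a"
proof -
  have "max_ideal_sq R \<subseteq> fps_order_ge (a + a)"
    using max_ideal_subset_fps_order_ge by (intro fps_ideal_mult_subset_fps_order_ge)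
  moreover have "fps_X ^ c \<in> max_ideal_sq R"
    using fps_order_ge_subset_max_ideal_sq by auto
  ultimately have "(fps_X ^ c :: 'a fps) \<in> fps_order_ge (a + a)" by blast
  then show ?thesis by simp
qed

(* S is the ring R[C/x_1] and gaps is {b_1, ..., b_s}. *)
abbreviation S :: "'a fps set" where
  "S \<equiv> R + fps_order_ge (c - a)"

abbreviation gaps :: "nat set" where
  "gaps \<equiv> {c - a..<c} - vals R"

lemma a_le_c: "a \<le> c"
  using a_le_c_minus_a by linarith

lemma alg_gen_eq_S: "alg_gen (R \<union> {y. fps_X ^ a * y \<in> conductor R}) = S"
proof -
  have "{y. fps_X ^ a * y \<in> conductor R} = fps_order_ge (c - a)"
    using a_le_c by (auto simp: conductor_eq mult_X_power_mem_fps_order_ge_iff)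
  then show ?thesis by (simp add: alg_gen_Un_fps_order_ge[OF subalgebra])
qed

lemma subalgebra_S: "fps_subalgebra S"
  using subalgebra by (rule fps_subalgebra_plus_fps_order_ge)

lemma R_subset_S: "R \<subseteq> S"
  by (rule subset_plus_fps_order_ge)

lemma fps_order_ge_subset_S: "fps_order_ge (c - a) \<subseteq> S"
  using fps_subalgebra_zero[OF subalgebra] by (rule fps_order_ge_subset_plus)

lemma max_ideal_S: "max_ideal S = max_ideal R + fps_order_ge (c - a)"
proof -
  have "t $ 0 = 0" if "t \<in> fps_order_ge (c - a)" for t :: "'a fps"
    using that a_pos a_le_c_minus_a by (simp add: fps_order_ge_def)
  then have "(f - r) \<in> fps_order_ge (c - a) \<Longrightarrow> f $ 0 = r $ 0" for f r :: "'a fps"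
    by fastforce
  then show ?thesis
    by (auto simp: max_ideal_def mem_plus_fps_order_ge_iff)
qed

lemma max_ideal_S_subset_fps_order_ge: "max_ideal S \<subseteq> fps_order_ge a"
proof
  fix f assume "f \<in> max_ideal S"
  then obtain r where r: "r \<in> max_ideal R" "f - r \<in> fps_order_ge (c - a)"
    by (auto simp: max_ideal_S mem_plus_fps_order_ge_iff)
  have "r + (f - r) \<in> fps_order_ge a"
    using r max_ideal_subset_fps_order_ge fps_order_ge_antimono[OF a_le_c_minus_a]
    by (blast intro: fps_order_ge_add)
  then show "f \<in> fps_order_ge a" by simp
qed

lemma max_ideal_sq_S: "max_ideal_sq S = max_ideal_sq R"
proof
  have "max_ideal R \<subseteq> max_ideal S"
    using R_subset_S by (auto simp: max_ideal_def)
  then show "max_ideal_sq R \<subseteq> max_ideal_sq S"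
    by (intro fps_ideal_mult_mono)
next
  show "max_ideal_sq S \<subseteq> max_ideal_sq R"
  proof
    fix h assume "h \<in> max_ideal_sq S"
    then show "h \<in> max_ideal_sq R"
    proof (induction rule: fps_ideal_mult_induct)
      case zero
      show ?case by (rule fps_ideal_mult_zero)
    next
      case (mult_add p q h)
      obtain r where r: "r \<in> max_ideal R" "p - r \<in> fps_order_ge (c - a)"
        using mult_add(1) by (auto simp: max_ideal_S mem_plus_fps_order_ge_iff)
      obtain s where s: "s \<in> max_ideal R" "q - s \<in> fps_order_ge (c - a)"
        using mult_add(2) by (auto simp: max_ideal_S mem_plus_fps_order_ge_iff)
      have "(p - r) * q \<in> fps_order_ge (c - a + a)"
        using r(2) mult_add(2) max_ideal_S_subset_fps_order_ge by (blast intro: fps_order_ge_mult)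
      moreover have "r * (q - s) \<in> fps_order_ge (a + (c - a))"
        using r(1) s(2) max_ideal_subset_fps_order_ge by (blast intro: fps_order_ge_mult)
      ultimately have "(p - r) * q + r * (q - s) \<in> fps_order_ge c"
        using a_le_c by (simp add: fps_order_ge_add)
      then have "(p - r) * q + r * (q - s) + h \<in> max_ideal_sq R"
        using fps_order_ge_subset_max_ideal_sq mult_add(3) by (blast intro: fps_ideal_mult_add)
      then have "r * s + ((p - r) * q + r * (q - s) + h) \<in> max_ideal_sq R"
        using fps_ideal_mult_mult_add[OF r(1) s(1)] by blast
      then show ?case by (simp add: algebra_simps)
    qed
  qed
qed

lemma vals_max_ideal_S: "vals (max_ideal S) = vals (max_ideal R) \<union> {c - a..}"
proof (intro equalityI subsetI)
  fix d assume "d \<in> vals (max_ideal S)"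
  then obtain f where f: "f \<in> max_ideal S" "f \<noteq> 0" "subdegree f = d"
    by (auto simp: vals_def)
  show "d \<in> vals (max_ideal R) \<union> {c - a..}"
  proof (cases "c - a \<le> d")
    case False
    obtain r where r: "r \<in> max_ideal R" "f - r \<in> fps_order_ge (c - a)"
      using f(1) by (auto simp: max_ideal_S mem_plus_fps_order_ge_iff)
    then have "r \<noteq> 0 \<and> subdegree r = d"
      using f False by (auto dest: subdegree_eq_if_fps_order_ge_diff)
    then show ?thesis using r(1) by (auto simp: vals_def)
  qed simp
next
  fix d assume "d \<in> vals (max_ideal R) \<union> {c - a..}"
  then show "d \<in> vals (max_ideal S)"
  proof
    assume "d \<in> vals (max_ideal R)"
    moreover have "max_ideal R \<subseteq> max_ideal S"
      using R_subset_S by (auto simp: max_ideal_def)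
    ultimately show ?thesis using vals_mono by blast
  next
    assume "d \<in> {c - a..}"
    then have "fps_X ^ d \<in> max_ideal S"
      using fps_order_ge_subset_S a_pos a_le_c_minus_a by (auto simp: max_ideal_def)
    then show ?thesis by (force simp: vals_def fps_X_power_subdegree)
  qed
qed

lemma HK_vals_S: "HK_vals S = HK_vals R \<union> gaps"
proof (intro set_eqI)
  fix d
  have "d \<in> vals (max_ideal R) \<longleftrightarrow> d \<in> vals R" if "c - a \<le> d"
    using that a_pos a_le_c_minus_a by (intro mem_vals_max_ideal_iff) simp
  moreover have "d \<notin> vals (max_ideal_sq R)" if "d \<notin> vals (max_ideal R)"
    using that vals_mono[OF max_ideal_sq_subset[OF subalgebra]] by blast
  moreover have "d < c" if "d \<notin> vals (max_ideal_sq R)"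
    using that mem_vals_max_ideal_sq not_le by blast
  ultimately show "d \<in> HK_vals S \<longleftrightarrow> d \<in> HK_vals R \<union> gaps"
    unfolding HK_vals_def vals_max_ideal_S max_ideal_sq_S by auto
qed

lemma finite_HK_vals_S: "finite (HK_vals S)"
  using finite_HK_vals by (simp add: HK_vals_S)

abbreviation i0 :: nat where
  "i0 \<equiv> card {d \<in> HK_vals R. d < c - a}"

lemma HK_seq_split:
  "HK_seq R = sorted_list_of_set {d \<in> HK_vals R. d < c - a} @
     sorted_list_of_set {d \<in> HK_vals R. c - a \<le> d}"
  "HK_seq S = sorted_list_of_set {d \<in> HK_vals R. d < c - a} @
     sorted_list_of_set ({d \<in> HK_vals R. c - a \<le> d} \<union> gaps)"
proof -
  let ?L = "{d \<in> HK_vals R. d < c - a}" and ?M = "{d \<in> HK_vals R. c - a \<le> d}"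
  have fin: "finite ?L" "finite ?M" using finite_HK_vals by auto
  have "HK_seq R = sorted_list_of_set (?L \<union> ?M)"
    unfolding HK_seq_eq by (rule arg_cong[of _ _ sorted_list_of_set]) auto
  also have "\<dots> = sorted_list_of_set ?L @ sorted_list_of_set ?M"
    using fin by (intro sorted_list_of_set_Un_less) auto
  finally show "HK_seq R = sorted_list_of_set ?L @ sorted_list_of_set ?M" .
  have "HK_seq S = sorted_list_of_set (?L \<union> (?M \<union> gaps))"
    unfolding HK_seq_eq HK_vals_S by (rule arg_cong[of _ _ sorted_list_of_set]) auto
  also have "\<dots> = sorted_list_of_set ?L @ sorted_list_of_set (?M \<union> gaps)"
    using fin by (intro sorted_list_of_set_Un_less) auto
  finally show "HK_seq S = sorted_list_of_set ?L @ sorted_list_of_set (?M \<union> gaps)" .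
qed

lemma HK_vals_disjoint_gaps: "HK_vals R \<inter> gaps = {}"
  using vals_mono[OF max_ideal_subset] by (auto simp: HK_vals_def)

lemma length_HK_seq_S: "length (HK_seq S) = length (HK_seq R) + card gaps"
proof -
  have "{d \<in> HK_vals R. c - a \<le> d} \<inter> gaps = {}" using HK_vals_disjoint_gaps by blast
  then show ?thesis using finite_HK_vals by (simp add: HK_seq_split card_Un_disjoint)
qed

lemma nth_HK_seq_S_less_i0: "j < i0 \<Longrightarrow> HK_seq S ! j = HK_seq R ! j"
  by (simp add: HK_seq_split nth_append)

lemma set_drop_HK_seq_S: "set (drop i0 (HK_seq S)) = set (drop i0 (HK_seq R)) \<union> gaps"
  using finite_HK_vals by (simp add: HK_seq_split)

lemma c_minus_a_le_nth_HK_seq_S: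
  assumes "i0 \<le> j" "j < length (HK_seq S)"
  shows "c - a \<le> HK_seq S ! j"
proof -
  have "drop i0 (HK_seq S) ! (j - i0) \<in> set (drop i0 (HK_seq S))"
    using assms by (intro nth_mem) simp
  moreover have "drop i0 (HK_seq S) ! (j - i0) = HK_seq S ! j"
    using assms by simp
  ultimately have "HK_seq S ! j \<in> set (drop i0 (HK_seq S))"
    by (simp only:)
  then show ?thesis
    using finite_HK_vals by (auto simp: HK_seq_split)
qed

lemma Max_index_eq_i0:
  "Max ({0} \<union> {i + 1 | i. i < length (HK_seq R) \<and> HK_seq R ! i < c - a}) = i0"
proof -
  have "Max ({0} \<union> {i + 1 | i. i < length (HK_seq R) \<and> HK_seq R ! i < c - a}) =
      length (sorted_list_of_set {d \<in> HK_vals R. d < c - a})"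
    unfolding HK_seq_split(1) using finite_HK_vals by (intro Max_Suc_index_less_eq_length) auto
  then show ?thesis by simp
qed

lemma HK_generators_S:
  fixes xs :: "'a fps list"
  assumes "length xs = length (HK_seq R)"
    and "\<forall>i<length xs. xs ! i \<in> R \<and> subdegree (xs ! i) = HK_seq R ! i"
    and "j < length (HK_seq S)"
  defines "x \<equiv> if j < i0 then xs ! j else fps_X ^ (HK_seq S ! j)"
  shows "x \<in> S \<and> subdegree x = HK_seq S ! j"
proof (cases "j < i0")
  case True
  then have "j < length xs" using assms(1) by (simp add: HK_seq_split)
  then show ?thesis
    using True assms(2) R_subset_S by (auto simp: x_def nth_HK_seq_S_less_i0)
next
  case False
  then have "c - a \<le> HK_seq S ! j" using assms(3) by (simp add: c_minus_a_le_nth_HK_seq_S)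
  then show ?thesis
    using False fps_order_ge_subset_S by (auto simp: x_def fps_X_power_subdegree)
qed

end

theorem mainTheorem11:
  fixes R :: "'a::field_char_0 fps set" and xs :: "'a fps list"
  assumes "alg_closed_field TYPE('a)"
    and "curve_ring R"
    and "length xs = length (HK_seq R)"
    and "\<forall>i<length xs. xs ! i \<in> R \<and> subdegree (xs ! i) = HK_seq R ! i"
    and "xs ! 0 = fps_X ^ (HK_seq R ! 0)"
    and "conductor R \<subseteq> fps_ideal_mult (max_ideal R) (max_ideal R)"
  shows
    "let as = HK_seq R; n = length as; a1 = as ! 0; c = cond_exp R;
         S = alg_gen (R \<union> {y. xs ! 0 * y \<in> conductor R});
         bs = sorted_list_of_set ({c - a1..<c} - vals R); s = length bs;
         i0 = Max ({0} \<union> {i + 1 | i. i < n \<and> as ! i < c - a1});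
         hs = HK_seq S;
         xt = (\<lambda>j. if j < i0 then xs ! j else fps_X ^ (hs ! j))
     in length hs = n + s \<and>
        (\<forall>j<i0. hs ! j = as ! j) \<and>
        set (drop i0 hs) = set (drop i0 as) \<union> set bs \<and>
        (\<forall>j<n + s. xt j \<in> S \<and> subdegree (xt j) = hs ! j) \<and>
        S = ps_gen (xt ` {..<n + s})"
proof -
  interpret conductor_in_max_ideal_sq R "HK_seq R ! 0" "cond_exp R"
    using assms(2,6) by unfold_locales simp_all
  define xt where "xt = (\<lambda>j. if j < i0 then xs ! j else fps_X ^ (HK_seq S ! j))"
  have gens: "\<forall>j<length (HK_seq S). xt j \<in> S \<and> subdegree (xt j) = HK_seq S ! j"
    using HK_generators_S[OF assms(3,4)] by (simp add: xt_def)
  show ?thesis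
    unfolding Let_def alg_gen_eq_S[folded assms(5)] Max_index_eq_i0 xt_def[symmetric]
  proof (intro conjI)
    show "S = ps_gen (xt ` {..<length (HK_seq R) + length (sorted_list_of_set gaps)})"
      using ps_gen_eq_HK_seq[OF subalgebra_S fps_order_ge_subset_S finite_HK_vals_S gens]
      by (simp add: length_HK_seq_S)
  qed (use gens in \<open>simp_all add: xt_def length_HK_seq_S nth_HK_seq_S_less_i0 set_drop_HK_seq_S\<close>)
qed

end
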